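(* For every formula $\varphi$ of $\mathcal{L}(\Rightarrow)$, $\varphi$ is a theorem of the Yalcin logic if and only if $\varphi$ is a theorem of the logic defined in the same way as the Yalcin logic but with the axiom schemes A1–A4 in place of I1–I7, where A1: $(\varphi\Rightarrow\pi)\leftrightarrow\Box(\varphi\to\pi)$ for $\pi$ nonmodal; A2: $(\varphi\Rightarrow(\alpha\wedge\beta))\leftrightarrow((\varphi\Rightarrow\alpha)\wedge(\varphi\Rightarrow\beta))$; A3: $(\varphi\Rightarrow(\alpha\vee\Box\beta))\leftrightarrow((\varphi\Rightarrow\alpha)\vee(\varphi\Rightarrow\beta))$; A4: $(\varphi\Rightarrow(\alpha\vee\Diamond\beta))\leftrightarrow((\varphi\Rightarrow\alpha)\vee\neg(\varphi\Rightarrow\neg\beta))$.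
   Context: The language $\mathcal{L}(\Rightarrow)$ is given by $\varphi::= p\mid \neg\varphi\mid (\varphi\wedge\varphi)\mid \Box\varphi \mid (\varphi\Rightarrow\varphi)$, with $p$ ranging over a fixed set of propositional variables; $\vee,\to,\leftrightarrow,\bot$ as usual and $\Diamond\varphi:=\neg\Box\neg\varphi$. A formula is nonmodal if it contains neither $\Rightarrow$ nor $\Box$. The Yalcin logic is the smallest set of formulas of $\mathcal{L}(\Rightarrow)$ closed under replacement of equivalents (if $\alpha\leftrightarrow\beta$ is in the set and $\varphi'$ results from $\varphi$ by replacing an occurrence of $\alpha$ by $\beta$, then $\varphi\leftrightarrow\varphi'$ is in the set), modus ponens for $\to$, and necessitation for $\Box$, and containing all substitution instances of propositional tautologies and all instances of: K: $\Box(\varphi\to\psi)\to(\Box\varphi\to\Box\psi)$; 4: $\Diamond\Diamond\varphi\to\Diamond\varphi$; 5: $\Diamond\Box\varphi\to\Box\varphi$; I1: $(\varphi\Rightarrow\pi)\leftrightarrow\Box(\varphi\to\pi)$ for $\pi$ nonmodal; I2: $(\varphi\Rightarrow(\alpha\wedge\beta))\leftrightarrow((\varphi\Rightarrow\alpha)\wedge(\varphi\Rightarrow\beta))$; I3: $(\varphi\Rightarrow\alpha)\to(\varphi\Rightarrow(\alpha\vee\beta))$; I4: $(\varphi\Rightarrow\alpha)\to(\varphi\Rightarrow\Box\alpha)$; I5: $((\varphi\Rightarrow(\alpha\vee\Box\beta))\wedge\neg(\varphi\Rightarrow\beta))\to(\varphi\Rightarrow\alpha)$; I6: $((\varphi\Rightarrow(\alpha\vee\Diamond\beta))\wedge(\varphi\Rightarrow\neg\beta))\to(\varphi\Rightarrow\alpha)$;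 I7: $\neg(\varphi\Rightarrow\beta)\to(\varphi\Rightarrow\Diamond\neg\beta)$. The alternative logic has the same rules and the axioms tautologies, K, 4, 5, A1–A4. *)

theory Defs
  imports Main
begin

datatype 'p fm = Atom 'p | Neg "'p fm" | Conj "'p fm" "'p fm" | Box "'p fm"
  | Cond "'p fm" "'p fm"

definition Or :: "'p fm \<Rightarrow> 'p fm \<Rightarrow> 'p fm" where
  "Or a b = Neg (Conj (Neg a) (Neg b))"
definition Imp :: "'p fm \<Rightarrow> 'p fm \<Rightarrow> 'p fm" where
  "Imp a b = Neg (Conj a (Neg b))"
definition Iff :: "'p fm \<Rightarrow> 'p fm \<Rightarrow> 'p fm" where
  "Iff a b = Conj (Imp a b) (Imp b a)"
definition Dia :: "'p fm \<Rightarrow> 'p fm" where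
  "Dia a = Neg (Box (Neg a))"

fun nonmodal :: "'p fm \<Rightarrow> bool" where
  "nonmodal (Atom p) = True"
| "nonmodal (Neg a) = nonmodal a"
| "nonmodal (Conj a b) = (nonmodal a \<and> nonmodal b)"
| "nonmodal (Box a) = False"
| "nonmodal (Cond a b) = False"

fun peval :: "('q \<Rightarrow> bool) \<Rightarrow> 'q fm \<Rightarrow> bool" where
  "peval v (Atom p) = v p"
| "peval v (Neg a) = (\<not> peval v a)"
| "peval v (Conj a b) = (peval v a \<and> peval v b)"
| "peval v (Box a) = False"
| "peval v (Cond a b) = False"

fun subst :: "('q \<Rightarrow> 'p fm) \<Rightarrow> 'q fm \<Rightarrow> 'p fm" where
  "subst s (Atom p) = s p"
| "subst s (Neg a) = Neg (subst s a)"
| "subst s (Conj a b) = Conj (subst s a) (subst s b)"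
| "subst s (Box a) = Box (subst s a)"
| "subst s (Cond a b) = Cond (subst s a) (subst s b)"

definition taut :: "nat fm \<Rightarrow> bool" where
  "taut \<psi> \<longleftrightarrow> nonmodal \<psi> \<and> (\<forall>v. peval v \<psi>)"

definition taut_inst :: "'p fm \<Rightarrow> bool" where
  "taut_inst \<phi> \<longleftrightarrow> (\<exists>\<psi> s. taut \<psi> \<and> \<phi> = subst s \<psi>)"

inductive repl :: "'p fm \<Rightarrow> 'p fm \<Rightarrow> 'p fm \<Rightarrow> 'p fm \<Rightarrow> bool" for a b where
  here: "repl a b a b"
| neg: "repl a b f g \<Longrightarrow> repl a b (Neg f) (Neg g)"
| conjL: "repl a b f g \<Longrightarrow> repl a b (Conj f h) (Conj g h)"
| conjR: "repl a b f g \<Longrightarrow> repl a b (Conj h f) (Conj h g)"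
| box: "repl a b f g \<Longrightarrow> repl a b (Box f) (Box g)"
| condL: "repl a b f g \<Longrightarrow> repl a b (Cond f h) (Cond g h)"
| condR: "repl a b f g \<Longrightarrow> repl a b (Cond h f) (Cond h g)"

inductive thm_of :: "'p fm set \<Rightarrow> 'p fm \<Rightarrow> bool" for Ax where
  ax: "\<phi> \<in> Ax \<Longrightarrow> thm_of Ax \<phi>"
| taut: "taut_inst \<phi> \<Longrightarrow> thm_of Ax \<phi>"
| K: "thm_of Ax (Imp (Box (Imp \<phi> \<psi>)) (Imp (Box \<phi>) (Box \<psi>)))"
| four: "thm_of Ax (Imp (Dia (Dia \<phi>)) (Dia \<phi>))"
| five: "thm_of Ax (Imp (Dia (Box \<phi>)) (Box \<phi>))"
| mp: "thm_of Ax (Imp \<phi> \<psi>) \<Longrightarrow> thm_of Ax \<phi> \<Longrightarrow> thm_of Ax \<psi>"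
| nec: "thm_of Ax \<phi> \<Longrightarrow> thm_of Ax (Box \<phi>)"
| re: "thm_of Ax (Iff \<alpha> \<beta>) \<Longrightarrow> repl \<alpha> \<beta> \<phi> \<phi>' \<Longrightarrow> thm_of Ax (Iff \<phi> \<phi>')"

definition YalcinAx :: "'p fm set" where
  "YalcinAx =
     {Iff (Cond \<phi> \<pi>) (Box (Imp \<phi> \<pi>)) | \<phi> \<pi>. nonmodal \<pi>}
   \<union> {Iff (Cond \<phi> (Conj \<alpha> \<beta>)) (Conj (Cond \<phi> \<alpha>) (Cond \<phi> \<beta>)) | \<phi> \<alpha> \<beta>. True}
   \<union> {Imp (Cond \<phi> \<alpha>) (Cond \<phi> (Or \<alpha> \<beta>)) | \<phi> \<alpha> \<beta>. True}
   \<union> {Imp (Cond \<phi> \<alpha>) (Cond \<phi> (Box \<alpha>)) | \<phi> \<alpha>. True}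
   \<union> {Imp (Conj (Cond \<phi> (Or \<alpha> (Box \<beta>))) (Neg (Cond \<phi> \<beta>))) (Cond \<phi> \<alpha>) | \<phi> \<alpha> \<beta>. True}
   \<union> {Imp (Conj (Cond \<phi> (Or \<alpha> (Dia \<beta>))) (Cond \<phi> (Neg \<beta>))) (Cond \<phi> \<alpha>) | \<phi> \<alpha> \<beta>. True}
   \<union> {Imp (Neg (Cond \<phi> \<beta>)) (Cond \<phi> (Dia (Neg \<beta>))) | \<phi> \<beta>. True}"

definition AltAx :: "'p fm set" where
  "AltAx =
     {Iff (Cond \<phi> \<pi>) (Box (Imp \<phi> \<pi>)) | \<phi> \<pi>. nonmodal \<pi>}
   \<union> {Iff (Cond \<phi> (Conj \<alpha> \<beta>)) (Conj (Cond \<phi> \<alpha>) (Cond \<phi> \<beta>)) | \<phi> \<alpha> \<beta>. True}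
   \<union> {Iff (Cond \<phi> (Or \<alpha> (Box \<beta>))) (Or (Cond \<phi> \<alpha>) (Cond \<phi> \<beta>)) | \<phi> \<alpha> \<beta>. True}
   \<union> {Iff (Cond \<phi> (Or \<alpha> (Dia \<beta>))) (Or (Cond \<phi> \<alpha>) (Neg (Cond \<phi> (Neg \<beta>)))) | \<phi> \<alpha> \<beta>. True}"

end

theory Submission
  imports Defs
begin

text \<open>Both logics share their rules, so it suffices to derive the extra axioms of each
  in the other. Over I1, I2 the schemes A3 and A4 split into one direction given by I5
  resp. I6 and a converse obtained from I3 together with I4 resp. I7; conversely, I5 and
  I6 are halves of A3 and A4, while I3, I4 and I7 follow from A2, A3 and A4 by replacing
  propositionally equivalent consequents of a conditional.\<close>

lemma thm_of_mono:
  assumes "thm_of B \<phi>" and "\<And>\<psi>. \<psi> \<in> B \<Longrightarrow> thm_of A \<psi>"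
  shows "thm_of A \<phi>"
  using assms by (induction rule: thm_of.induct) (auto intro: thm_of.intros)

lemmas connective_defs = Imp_def Iff_def Or_def Dia_def

text \<open>Boxed formulas and conditionals count as propositional letters.\<close>

fun pval :: "('p fm \<Rightarrow> bool) \<Rightarrow> 'p fm \<Rightarrow> bool" where
  "pval V (Neg a) = (\<not> pval V a)"
| "pval V (Conj a b) = (pval V a \<and> pval V b)"
| "pval V a = V a"

fun prop_letters :: "'p fm \<Rightarrow> 'p fm list" where
  "prop_letters (Neg a) = prop_letters a"
| "prop_letters (Conj a b) = prop_letters a @ prop_letters b"
| "prop_letters a = [a]"

primrec pos :: "'a list \<Rightarrow> 'a \<Rightarrow> nat" where
  "pos [] x = 0"
| "pos (y # ys) x = (if x = y then 0 else Suc (pos ys x))"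

lemma nth_pos: "x \<in> set xs \<Longrightarrow> xs ! pos xs x = x"
  by (induction xs) auto

fun skeleton :: "'p fm list \<Rightarrow> 'p fm \<Rightarrow> nat fm" where
  "skeleton xs (Neg a) = Neg (skeleton xs a)"
| "skeleton xs (Conj a b) = Conj (skeleton xs a) (skeleton xs b)"
| "skeleton xs a = Atom (pos xs a)"

lemma nonmodal_skeleton: "nonmodal (skeleton xs \<phi>)"
  by (induction xs \<phi> rule: skeleton.induct) auto

lemma subst_skeleton:
  "set (prop_letters \<phi>) \<subseteq> set xs \<Longrightarrow> subst ((!) xs) (skeleton xs \<phi>) = \<phi>"
  by (induction xs \<phi> rule: skeleton.induct) (auto simp: nth_pos)

lemma peval_skeleton: "peval v (skeleton xs \<phi>) = pval (v \<circ> pos xs) \<phi>"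
  by (induction xs \<phi> rule: skeleton.induct) auto

text \<open>A formula is a substitution instance of its skeleton, whose classical truth
  table is the pval-truth table of the formula.\<close>

lemma thm_of_taut:
  assumes "\<And>V. pval V \<phi>"
  shows "thm_of Ax \<phi>"
proof (rule thm_of.taut)
  let ?xs = "prop_letters \<phi>"
  have "taut (skeleton ?xs \<phi>)"
    using assms by (simp add: taut_def nonmodal_skeleton peval_skeleton)
  moreover have "\<phi> = subst ((!) ?xs) (skeleton ?xs \<phi>)"
    by (simp add: subst_skeleton)
  ultimately show "taut_inst \<phi>"
    unfolding taut_inst_def by blast
qed

lemma thm_of_prop1:
  assumes "thm_of Ax a" and "\<And>V. pval V a \<Longrightarrow> pval V b"
  shows "thm_of Ax b"
  by (rule thm_of.mp[OF thm_of_taut assms(1)]) (simp add: connective_defs assms(2))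

lemma thm_of_prop2:
  assumes "thm_of Ax a" "thm_of Ax b" and "\<And>V. pval V a \<Longrightarrow> pval V b \<Longrightarrow> pval V c"
  shows "thm_of Ax c"
  by (rule thm_of.mp[OF thm_of_prop1[OF assms(1)] assms(2)]) (simp add: connective_defs assms(3))

lemma thm_of_prop3:
  assumes "thm_of Ax a" "thm_of Ax b" "thm_of Ax c"
    and "\<And>V. pval V a \<Longrightarrow> pval V b \<Longrightarrow> pval V c \<Longrightarrow> pval V d"
  shows "thm_of Ax d"
  by (rule thm_of.mp[OF thm_of_prop2[OF assms(1,2)] assms(3)]) (simp add: connective_defs assms(4))

lemma cond_cong_taut:
  assumes "\<And>V. pval V a = pval V b"
  shows "thm_of Ax (Iff (Cond \<phi> a) (Cond \<phi> b))"
  by (rule thm_of.re[OF thm_of_taut repl.condR[OF repl.here]]) (simp add: connective_defs assms)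

lemma cond_Or_commute: "thm_of Ax (Iff (Cond \<phi> (Or a b)) (Cond \<phi> (Or b a)))"
  by (rule cond_cong_taut) (auto simp: Or_def)

lemma cond_Or_Dia_Neg_Neg: "thm_of Ax (Iff (Cond \<phi> (Or a (Dia (Neg (Neg b))))) (Cond \<phi> (Or a (Dia b))))"
  unfolding Or_def Dia_def
  by (rule thm_of.re[OF thm_of_taut[of "Iff (Neg (Neg b)) b"]])
     (auto simp: connective_defs intro!: repl.intros)

lemma alt_A1: "nonmodal \<pi> \<Longrightarrow> thm_of AltAx (Iff (Cond \<phi> \<pi>) (Box (Imp \<phi> \<pi>)))"
  by (rule thm_of.ax) (unfold AltAx_def, blast)

lemma alt_A2: "thm_of AltAx (Iff (Cond \<phi> (Conj \<alpha> \<beta>)) (Conj (Cond \<phi> \<alpha>) (Cond \<phi> \<beta>)))"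
  by (rule thm_of.ax) (unfold AltAx_def, blast)

lemma alt_A3: "thm_of AltAx (Iff (Cond \<phi> (Or \<alpha> (Box \<beta>))) (Or (Cond \<phi> \<alpha>) (Cond \<phi> \<beta>)))"
  by (rule thm_of.ax) (unfold AltAx_def, blast)

lemma alt_A4:
  "thm_of AltAx (Iff (Cond \<phi> (Or \<alpha> (Dia \<beta>))) (Or (Cond \<phi> \<alpha>) (Neg (Cond \<phi> (Neg \<beta>)))))"
  by (rule thm_of.ax) (unfold AltAx_def, blast)

text \<open>I3 follows from A2 since \<alpha> is equivalent to \<alpha> \<and> (\<alpha> \<or> \<beta>); I4 and I7 are the
  instances of A3 and A4 with the contradiction \<alpha> \<and> \<not>\<alpha> as left disjunct.\<close>

lemma alt_I3: "thm_of AltAx (Imp (Cond \<phi> \<alpha>) (Cond \<phi> (Or \<alpha> \<beta>)))"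
  by (rule thm_of_prop2[OF cond_cong_taut[of \<alpha> "Conj \<alpha> (Or \<alpha> \<beta>)"]
        alt_A2[of \<phi> \<alpha> "Or \<alpha> \<beta>"]])
     (auto simp: connective_defs)

lemma alt_I4: "thm_of AltAx (Imp (Cond \<phi> \<alpha>) (Cond \<phi> (Box \<alpha>)))"
  by (rule thm_of_prop2[OF alt_A3[of \<phi> "Conj \<alpha> (Neg \<alpha>)" \<alpha>]
        cond_cong_taut[of "Or (Conj \<alpha> (Neg \<alpha>)) (Box \<alpha>)" "Box \<alpha>"]])
     (auto simp: connective_defs)

lemma alt_I5: "thm_of AltAx (Imp (Conj (Cond \<phi> (Or \<alpha> (Box \<beta>))) (Neg (Cond \<phi> \<beta>))) (Cond \<phi> \<alpha>))"
  by (rule thm_of_prop1[OF alt_A3[of \<phi> \<alpha> \<beta>]]) (auto simp: connective_defs)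

lemma alt_I6: "thm_of AltAx (Imp (Conj (Cond \<phi> (Or \<alpha> (Dia \<beta>))) (Cond \<phi> (Neg \<beta>))) (Cond \<phi> \<alpha>))"
  by (rule thm_of_prop1[OF alt_A4[of \<phi> \<alpha> \<beta>]]) (auto simp: connective_defs)

lemma alt_I7: "thm_of AltAx (Imp (Neg (Cond \<phi> \<beta>)) (Cond \<phi> (Dia (Neg \<beta>))))"
  by (rule thm_of_prop3[OF alt_A4[of \<phi> "Conj \<beta> (Neg \<beta>)" "Neg \<beta>"]
        cond_cong_taut[of "Neg (Neg \<beta>)" \<beta>]
        cond_cong_taut[of "Or (Conj \<beta> (Neg \<beta>)) (Dia (Neg \<beta>))" "Dia (Neg \<beta>)"]])
     (auto simp: connective_defs)

lemma yalcin_axioms_in_alt: "\<psi> \<in> YalcinAx \<Longrightarrow> thm_of AltAx \<psi>"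
  unfolding YalcinAx_def using alt_A1 alt_A2 alt_I3 alt_I4 alt_I5 alt_I6 alt_I7 by blast

lemma yalcin_I1: "nonmodal \<pi> \<Longrightarrow> thm_of YalcinAx (Iff (Cond \<phi> \<pi>) (Box (Imp \<phi> \<pi>)))"
  by (rule thm_of.ax) (unfold YalcinAx_def, blast)

lemma yalcin_I2: "thm_of YalcinAx (Iff (Cond \<phi> (Conj \<alpha> \<beta>)) (Conj (Cond \<phi> \<alpha>) (Cond \<phi> \<beta>)))"
  by (rule thm_of.ax) (unfold YalcinAx_def, blast)

lemma yalcin_I3: "thm_of YalcinAx (Imp (Cond \<phi> \<alpha>) (Cond \<phi> (Or \<alpha> \<beta>)))"
  by (rule thm_of.ax) (unfold YalcinAx_def, blast)

lemma yalcin_I4: "thm_of YalcinAx (Imp (Cond \<phi> \<alpha>) (Cond \<phi> (Box \<alpha>)))"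
  by (rule thm_of.ax) (unfold YalcinAx_def, blast)

lemma yalcin_I5:
  "thm_of YalcinAx (Imp (Conj (Cond \<phi> (Or \<alpha> (Box \<beta>))) (Neg (Cond \<phi> \<beta>))) (Cond \<phi> \<alpha>))"
  by (rule thm_of.ax) (unfold YalcinAx_def, blast)

lemma yalcin_I6:
  "thm_of YalcinAx (Imp (Conj (Cond \<phi> (Or \<alpha> (Dia \<beta>))) (Cond \<phi> (Neg \<beta>))) (Cond \<phi> \<alpha>))"
  by (rule thm_of.ax) (unfold YalcinAx_def, blast)

lemma yalcin_I7: "thm_of YalcinAx (Imp (Neg (Cond \<phi> \<beta>)) (Cond \<phi> (Dia (Neg \<beta>))))"
  by (rule thm_of.ax) (unfold YalcinAx_def, blast)

lemma yalcin_cond_OrI2: "thm_of YalcinAx (Imp (Cond \<phi> \<beta>) (Cond \<phi> (Or \<alpha> \<beta>)))"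
  by (rule thm_of_prop2[OF yalcin_I3[of \<phi> \<beta> \<alpha>] cond_Or_commute]) (auto simp: connective_defs)

lemma yalcin_A3:
  "thm_of YalcinAx (Iff (Cond \<phi> (Or \<alpha> (Box \<beta>))) (Or (Cond \<phi> \<alpha>) (Cond \<phi> \<beta>)))"
proof -
  have "thm_of YalcinAx (Imp (Cond \<phi> \<beta>) (Cond \<phi> (Or \<alpha> (Box \<beta>))))"
    by (rule thm_of_prop2[OF yalcin_I4[of \<phi> \<beta>] yalcin_cond_OrI2[of \<phi> "Box \<beta>" \<alpha>]])
       (auto simp: connective_defs)
  then show ?thesis
    by (rule thm_of_prop3[OF yalcin_I5[of \<phi> \<alpha> \<beta>] yalcin_I3[of \<phi> \<alpha> "Box \<beta>"]])
       (auto simp: connective_defs)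
qed

lemma yalcin_A4:
  "thm_of YalcinAx (Iff (Cond \<phi> (Or \<alpha> (Dia \<beta>))) (Or (Cond \<phi> \<alpha>) (Neg (Cond \<phi> (Neg \<beta>)))))"
proof -
  have "thm_of YalcinAx (Imp (Neg (Cond \<phi> (Neg \<beta>))) (Cond \<phi> (Or \<alpha> (Dia \<beta>))))"
    by (rule thm_of_prop3[OF yalcin_I7[of \<phi> "Neg \<beta>"]
          yalcin_cond_OrI2[of \<phi> "Dia (Neg (Neg \<beta>))" \<alpha>] cond_Or_Dia_Neg_Neg])
       (auto simp: connective_defs)
  then show ?thesis
    by (rule thm_of_prop3[OF yalcin_I6[of \<phi> \<alpha> \<beta>] yalcin_I3[of \<phi> \<alpha> "Dia \<beta>"]])
       (auto simp: connective_defs)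
qed

lemma alt_axioms_in_yalcin: "\<psi> \<in> AltAx \<Longrightarrow> thm_of YalcinAx \<psi>"
  unfolding AltAx_def using yalcin_I1 yalcin_I2 yalcin_A3 yalcin_A4 by blast

theorem lemma4:
  fixes \<phi> :: "'p fm"
  shows "thm_of YalcinAx \<phi> \<longleftrightarrow> thm_of AltAx \<phi>"
  using thm_of_mono yalcin_axioms_in_alt alt_axioms_in_yalcin by blast

end
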